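(* If $G$ is a graph with $\delta(G)\ge 2$, then $$\mathrm{TC}_2(G)\le \max\Big\{\Delta(G),\ \Big\lfloor\tfrac{\delta(G)}{2}\Big\rfloor(\Delta(G)-4)+\delta(G)\Big\}.$$ Moreover, this bound is sharp, i.e., there exist graphs attaining equality.
   Context: All graphs are finite, simple and connected. $N(v)$ denotes the open neighborhood of $v$; $\delta(G)$ and $\Delta(G)$ are minimum and maximum degree. A set $S\subseteq V(G)$ is a total $2$-dominating set if $|N(v)\cap S|\ge 2$ for every $v\in V(G)$. Two disjoint sets $U,W\subseteq V(G)$ form a total $2$-coalition if neither is a total $2$-dominating set but $U\cup W$ is. A total $2$-coalition partition of $G$ is a partition $\Omega$ of $V(G)$ in which every set forms a total $2$-coalition with some other set of $\Omega$; $\mathrm{TC}_2(G)$ is the maximum cardinality of such a partition. *)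

theory Defs
  imports Main "HOL-Library.Disjoint_Sets"
begin

definition graph :: "'a set \<Rightarrow> ('a \<Rightarrow> 'a \<Rightarrow> bool) \<Rightarrow> bool" where
  "graph V E \<longleftrightarrow> finite V \<and> V \<noteq> {}
     \<and> (\<forall>u v. E u v \<longrightarrow> u \<in> V \<and> v \<in> V)
     \<and> (\<forall>u v. E u v \<longrightarrow> E v u)
     \<and> (\<forall>v. \<not> E v v)
     \<and> (\<forall>u\<in>V. \<forall>v\<in>V. E\<^sup>*\<^sup>* u v)"

definition nbhd :: "'a set \<Rightarrow> ('a \<Rightarrow> 'a \<Rightarrow> bool) \<Rightarrow> 'a \<Rightarrow> 'a set" where
  "nbhd V E v = {u \<in> V. E v u}"

definition degree :: "'a set \<Rightarrow> ('a \<Rightarrow> 'a \<Rightarrow> bool) \<Rightarrow> 'a \<Rightarrow> nat" where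
  "degree V E v = card (nbhd V E v)"

definition min_degree :: "'a set \<Rightarrow> ('a \<Rightarrow> 'a \<Rightarrow> bool) \<Rightarrow> nat" where
  "min_degree V E = Min (degree V E ` V)"

definition max_degree :: "'a set \<Rightarrow> ('a \<Rightarrow> 'a \<Rightarrow> bool) \<Rightarrow> nat" where
  "max_degree V E = Max (degree V E ` V)"

definition total_2_dominating :: "'a set \<Rightarrow> ('a \<Rightarrow> 'a \<Rightarrow> bool) \<Rightarrow> 'a set \<Rightarrow> bool" where
  "total_2_dominating V E S \<longleftrightarrow> S \<subseteq> V \<and> (\<forall>v\<in>V. card (nbhd V E v \<inter> S) \<ge> 2)"

definition total_2_coalition :: "'a set \<Rightarrow> ('a \<Rightarrow> 'a \<Rightarrow> bool) \<Rightarrow> 'a set \<Rightarrow> 'a set \<Rightarrow> bool" where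
  "total_2_coalition V E U W \<longleftrightarrow> U \<inter> W = {}
     \<and> \<not> total_2_dominating V E U \<and> \<not> total_2_dominating V E W
     \<and> total_2_dominating V E (U \<union> W)"

definition total_2_coalition_partition :: "'a set \<Rightarrow> ('a \<Rightarrow> 'a \<Rightarrow> bool) \<Rightarrow> 'a set set \<Rightarrow> bool" where
  "total_2_coalition_partition V E \<Omega> \<longleftrightarrow> partition_on V \<Omega>
     \<and> (\<forall>U\<in>\<Omega>. \<exists>W\<in>\<Omega>. W \<noteq> U \<and> total_2_coalition V E U W)"

text \<open>Maximum cardinality of a total 2-coalition partition (Sup of a bounded
set of naturals; it is 0 if no such partition exists).\<close>
definition TC2 :: "'a set \<Rightarrow> ('a \<Rightarrow> 'a \<Rightarrow> bool) \<Rightarrow> nat" where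
  "TC2 V E = Sup {card \<Omega> | \<Omega>. total_2_coalition_partition V E \<Omega>}"

definition TC2_bound :: "'a set \<Rightarrow> ('a \<Rightarrow> 'a \<Rightarrow> bool) \<Rightarrow> int" where
  "TC2_bound V E = max (int (max_degree V E))
     (int (min_degree V E div 2) * (int (max_degree V E) - 4) + int (min_degree V E))"

end

theory Submission
  imports Defs
begin

(* Let v be a vertex of minimum degree and let a, b be the numbers of classes containing at
least two, respectively exactly one, neighbour of v; so 2a + b \<le> \<delta>.  A class missed by N(v)
can only form a coalition with one of the a heavy classes.  If each heavy class is the partner
of at most \<Delta> - 3 missed classes, then |\<Omega>| \<le> a + b + a(\<Delta> - 3) \<le> \<lfloor>\<delta>/2\<rfloor>(\<Delta> - 4) + \<delta>.
Otherwise some heavy class W has at least \<Delta> - 2 missed partners.  Pick x with at most one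
neighbour in W; x then needs at least one neighbour in each partner of W, which leaves at most
one neighbour for all remaining classes.  Hence every remaining class finds its partner among
W and its partners, and if it contains no neighbour of x, that partner is missed by N(v), so
the class itself is heavy.  Counting gives |\<Omega>| \<le> \<Delta> + a - 2 or |\<Omega>| \<le> \<Delta>.  Equality holds for the triangle, where both sides are 2. *)

definition coalition_bound :: "nat \<Rightarrow> nat \<Rightarrow> int" where
  "coalition_bound d D = max (int D) (int (d div 2) * (int D - 4) + int d)"

lemma TC2_bound_eq: "TC2_bound V E = coalition_bound (min_degree V E) (max_degree V E)"
  by (simp add: TC2_bound_def coalition_bound_def)

lemma le_coalition_boundI1:
  fixes a d D n :: nat
  assumes "2 * a \<le> d" "d \<le> D" "n \<le> D \<or> n + 2 \<le> D + a"
  shows "int n \<le> coalition_bound d D"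
proof (cases "a \<le> 2")
  case True
  then show ?thesis
    using assms by (auto simp: coalition_bound_def)
next
  case False
  then have "6 \<le> D" "a \<le> d div 2"
    using assms by auto
  then have "int a * (int D - 4) \<le> int (d div 2) * (int D - 4)"
    by (intro mult_right_mono) auto
  moreover have "2 * 3 \<le> (int a - 1) * (int D - 3)"
    using False \<open>6 \<le> D\<close> by (intro mult_mono) auto
  ultimately show ?thesis
    using assms by (auto simp: coalition_bound_def algebra_simps)
qed

lemma le_coalition_boundI2:
  fixes a b d D n :: nat
  assumes "2 * a + b \<le> d" "d \<le> D" "n \<le> a + b + a * (D - 3)"
  shows "int n \<le> coalition_bound d D"
proof (cases "4 \<le> D")
  case True
  have "int a * (int D - 4) \<le> int (d div 2) * (int D - 4)"
    using assms True by (intro mult_right_mono) auto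
  moreover have "int n \<le> int a * (int D - 4) + 2 * int a + int b"
  proof -
    have "int (a * (D - 3)) = int a * (int D - 3)"
      using True by (simp add: of_nat_diff)
    then show ?thesis
      using assms(3) by (simp add: algebra_simps)
  qed
  ultimately show ?thesis
    using assms by (auto simp: coalition_bound_def)
next
  case False
  then have "a * (D - 3) = 0"
    by simp
  then show ?thesis
    using assms by (auto simp: coalition_bound_def)
qed

(* An abstract total 2-coalition partition \<Omega>: w y X stands for |N(y) \<inter> X| and D for \<Delta>. *)
locale weighted_coalition_partition =
  fixes V :: "'v set" and \<Omega> :: "'b set" and coal :: "'b \<Rightarrow> 'b \<Rightarrow> bool"
    and w :: "'v \<Rightarrow> 'b \<Rightarrow> nat" and D :: nat
  assumes finite_classes: "finite \<Omega>"
    and partner_exists: "X \<in> \<Omega> \<Longrightarrow> \<exists>Y\<in>\<Omega>. Y \<noteq> X \<and> coal X Y"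
    and coalition_weight_ge: "\<lbrakk>X \<in> \<Omega>; Y \<in> \<Omega>; coal X Y; y \<in> V\<rbrakk> \<Longrightarrow> 2 \<le> w y X + w y Y"
    and class_not_dominating: "X \<in> \<Omega> \<Longrightarrow> \<exists>y\<in>V. w y X \<le> 1"
    and total_weight_le: "y \<in> V \<Longrightarrow> (\<Sum>X\<in>\<Omega>. w y X) \<le> D"
begin

definition heavy :: "'v \<Rightarrow> 'b set" where
  "heavy v = {X\<in>\<Omega>. 2 \<le> w v X}"

definition light :: "'v \<Rightarrow> 'b set" where
  "light v = {X\<in>\<Omega>. w v X = 1}"

definition unseen :: "'v \<Rightarrow> 'b set" where
  "unseen v = {X\<in>\<Omega>. w v X = 0}"

definition dependents :: "'v \<Rightarrow> 'b \<Rightarrow> 'b set" where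
  "dependents v W = {X\<in>unseen v. coal X W}"

definition outside :: "'v \<Rightarrow> 'b \<Rightarrow> 'b set" where
  "outside v W = \<Omega> - insert W (dependents v W)"

lemma card_classes_eq: "card \<Omega> = card (heavy v) + card (light v) + card (unseen v)"
proof -
  have fin: "finite (heavy v)" "finite (light v)" "finite (unseen v)"
    using finite_classes by (auto simp: heavy_def light_def unseen_def)
  have "card \<Omega> = card (heavy v \<union> light v \<union> unseen v)"
    by (rule arg_cong[where f = card]) (auto simp: heavy_def light_def unseen_def)
  also have "\<dots> = card (heavy v \<union> light v) + card (unseen v)"
    using fin by (intro card_Un_disjoint) (auto simp: heavy_def light_def unseen_def)
  also have "card (heavy v \<union> light v) = card (heavy v) + card (light v)"
    using fin by (intro card_Un_disjoint) (auto simp: heavy_def light_def)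
  finally show ?thesis .
qed

lemma heavy_light_le_total_weight:
  "2 * card (heavy v) + card (light v) \<le> (\<Sum>X\<in>\<Omega>. w v X)"
proof -
  have "2 * card (heavy v) \<le> sum (w v) (heavy v)"
    using sum_mono[of "heavy v" "\<lambda>_. 2" "w v"] by (simp add: heavy_def)
  moreover have "card (light v) = sum (w v) (light v)"
    by (simp add: light_def)
  moreover have "sum (w v) (heavy v) + sum (w v) (light v) \<le> sum (w v) \<Omega>"
    using finite_classes
    by (subst sum.union_disjoint[symmetric]) (auto simp: heavy_def light_def intro!: sum_mono2)
  ultimately show ?thesis
    by linarith
qed

lemma card_unseen_le:
  assumes "v \<in> V"
  shows "card (unseen v) \<le> (\<Sum>W\<in>heavy v. card (dependents v W))"
proof -
  have "unseen v \<subseteq> (\<Union>W\<in>heavy v. dependents v W)"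
  proof
    fix X assume X: "X \<in> unseen v"
    then obtain Y where Y: "Y \<in> \<Omega>" "coal X Y"
      using partner_exists by (auto simp: unseen_def)
    then have "2 \<le> w v Y"
      using coalition_weight_ge[of X Y v] X assms by (simp add: unseen_def)
    then show "X \<in> (\<Union>W\<in>heavy v. dependents v W)"
      using X Y by (auto simp: heavy_def dependents_def)
  qed
  then have "card (unseen v) \<le> card (\<Union>W\<in>heavy v. dependents v W)"
    using finite_classes by (intro card_mono) (auto simp: heavy_def dependents_def unseen_def)
  also have "\<dots> \<le> (\<Sum>W\<in>heavy v. card (dependents v W))"
    by (rule card_UN_le) (simp add: heavy_def finite_classes)
  finally show ?thesis .
qed

lemma dependents_subset: "W \<in> heavy v \<Longrightarrow> dependents v W \<subseteq> \<Omega> - {W}"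
  by (auto simp: dependents_def unseen_def heavy_def)

lemma finite_dependents: "finite (dependents v W)"
  using finite_classes by (simp add: dependents_def unseen_def)

lemma card_classes_eq_outside:
  assumes "W \<in> heavy v"
  shows "card \<Omega> = card (outside v W) + card (dependents v W) + 1"
proof -
  have T: "insert W (dependents v W) \<subseteq> \<Omega>"
    using assms dependents_subset by (auto simp: heavy_def)
  have "card (insert W (dependents v W)) = card (dependents v W) + 1"
    using assms dependents_subset finite_dependents by (subst card_insert_disjoint) auto
  then show ?thesis
    using card_mono[OF finite_classes T] card_Diff_subset[OF finite_subset[OF T finite_classes] T]
    by (simp add: outside_def)
qed

context
  fixes v x :: 'v and W :: 'b
  assumes v: "v \<in> V" and x: "x \<in> V" and W_heavy: "W \<in> heavy v" and x_W: "w x W \<le> 1"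
    and dependents_ne: "dependents v W \<noteq> {}"
    and many_dependents: "D \<le> card (dependents v W) + 2"
begin

lemma weight_dependent_ge: "X \<in> dependents v W \<Longrightarrow> 2 \<le> w x X + w x W"
  using coalition_weight_ge[of X W x] dependents_subset[OF W_heavy] W_heavy x
  by (auto simp: dependents_def heavy_def)

lemma total_weight_split:
  "sum (w x) (outside v W) + w x W + sum (w x) (dependents v W) \<le> D"
proof -
  let ?T = "insert W (dependents v W)"
  have "sum (w x) \<Omega> = sum (w x) (\<Omega> - ?T) + sum (w x) ?T"
    using dependents_subset[OF W_heavy] W_heavy finite_classes
    by (intro sum.subset_diff) (auto simp: heavy_def)
  also have "sum (w x) ?T = w x W + sum (w x) (dependents v W)"
    using dependents_subset[OF W_heavy] finite_dependents by (intro sum.insert) auto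
  finally show ?thesis
    using total_weight_le[OF x] by (simp add: outside_def)
qed

lemma weight_dependents_ge: "card (dependents v W) * (2 - w x W) \<le> sum (w x) (dependents v W)"
  using sum_mono[of "dependents v W" "\<lambda>_. 2 - w x W" "w x"] weight_dependent_ge by force

lemma weight_outside_le_one: "sum (w x) (outside v W) \<le> 1"
proof -
  have "1 \<le> card (dependents v W)"
    using dependents_ne finite_dependents by (simp add: Suc_le_eq card_gt_0_iff)
  then show ?thesis
    using total_weight_split weight_dependents_ge x_W many_dependents by (cases "w x W") auto
qed

lemma partner_of_outside:
  assumes "P \<in> outside v W" "P' \<in> \<Omega>" "P' \<noteq> P" "coal P P'"
  shows "P' \<in> insert W (dependents v W)"
proof (rule ccontr)
  assume "P' \<notin> insert W (dependents v W)"
  then have "w x P + w x P' \<le> sum (w x) (outside v W)"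
    using assms finite_classes sum_mono2[of _ "{P, P'}" "w x"] by (simp add: outside_def)
  moreover have "2 \<le> w x P + w x P'"
    using assms x by (intro coalition_weight_ge) (auto simp: outside_def)
  ultimately show False
    using weight_outside_le_one by simp
qed

lemma outside_zero_weight:
  assumes "P \<in> outside v W" "w x P = 0"
  shows "P \<in> heavy v - {W}" "\<exists>Q\<in>dependents v W. 2 \<le> w x Q"
proof -
  obtain P' where P': "P' \<in> \<Omega>" "P' \<noteq> P" "coal P P'"
    using assms(1) partner_exists by (auto simp: outside_def)
  have "2 \<le> w x P'"
    using coalition_weight_ge[of P P' x] assms P' x by (simp add: outside_def)
  then have "P' \<in> dependents v W"
    using partner_of_outside[OF assms(1) P'] x_W by auto
  moreover have "2 \<le> w v P + w v P'"
    using coalition_weight_ge[of P P' v] assms P' v by (simp add: outside_def)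
  ultimately show "P \<in> heavy v - {W}" "\<exists>Q\<in>dependents v W. 2 \<le> w x Q"
    using assms \<open>2 \<le> w x P'\<close> by (auto simp: heavy_def dependents_def unseen_def outside_def)
qed

lemma card_outside_zero_weight_less: "card {P\<in>outside v W. w x P = 0} < card (heavy v)"
proof (rule psubset_card_mono)
  show "finite (heavy v)"
    using finite_classes by (simp add: heavy_def)
  show "{P\<in>outside v W. w x P = 0} \<subset> heavy v"
    using outside_zero_weight(1) W_heavy by blast
qed

lemma card_outside_le: "card (outside v W) \<le> card {P\<in>outside v W. w x P = 0} + sum (w x) (outside v W)"
proof -
  let ?R0 = "{P\<in>outside v W. w x P = 0}" and ?R1 = "{P\<in>outside v W. w x P \<noteq> 0}"
  have fin: "finite (outside v W)"
    using finite_classes by (simp add: outside_def)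
  have "card (outside v W) = card ?R0 + card ?R1"
    using fin by (subst card_Un_disjoint[symmetric]) (auto intro: arg_cong[where f = card])
  moreover have "card ?R1 \<le> sum (w x) ?R1"
    using sum_mono[of ?R1 "\<lambda>_. 1" "w x"] by (simp add: Suc_le_eq)
  moreover have "sum (w x) ?R1 \<le> sum (w x) (outside v W)"
    using fin by (intro sum_mono2) auto
  ultimately show ?thesis
    by linarith
qed

lemma weight_dependents_gt:
  assumes "P \<in> outside v W" "w x P = 0"
  shows "card (dependents v W) < sum (w x) (dependents v W)"
proof -
  obtain Q where Q: "Q \<in> dependents v W" "2 \<le> w x Q"
    using outside_zero_weight(2)[OF assms] by blast
  have "1 \<le> w x X" if "X \<in> dependents v W - {Q}" for X
    using weight_dependent_ge[of X] x_W that by simp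
  then have "card (dependents v W - {Q}) \<le> sum (w x) (dependents v W - {Q})"
    using sum_mono[of "dependents v W - {Q}" "\<lambda>_. 1" "w x"] by simp
  moreover have "sum (w x) (dependents v W) = w x Q + sum (w x) (dependents v W - {Q})"
    using Q finite_dependents by (simp add: sum.remove)
  moreover have "card (dependents v W - {Q}) + 1 = card (dependents v W)"
    using card_Suc_Diff1[OF finite_dependents Q(1)] by simp
  ultimately show ?thesis
    using Q by linarith
qed

(* The case w x W = 0 with a single dependent is where 2 |heavy v| \<le> D is needed. *)
lemma card_classes_le_heavy: "card \<Omega> \<le> D \<or> card \<Omega> + 2 \<le> D + card (heavy v)"
proof -
  have "2 * card (heavy v) \<le> D"
    using heavy_light_le_total_weight[of v] total_weight_le[OF v] by linarith
  moreover have "1 \<le> card (dependents v W)"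
    using dependents_ne finite_dependents by (simp add: Suc_le_eq card_gt_0_iff)
  moreover have "card {P\<in>outside v W. w x P = 0} = 0 \<or>
      card (dependents v W) < sum (w x) (dependents v W)"
  proof (cases "\<exists>P\<in>outside v W. w x P = 0")
    case True
    then show ?thesis
      using weight_dependents_gt by blast
  next
    case False
    then have "{P\<in>outside v W. w x P = 0} = {}"
      by blast
    then show ?thesis
      by (intro disjI1) (simp only: card.empty)
  qed
  moreover have "w x W = 0 \<and> 2 * card (dependents v W) \<le> sum (w x) (dependents v W) \<or>
      w x W = 1 \<and> card (dependents v W) \<le> sum (w x) (dependents v W)"
  proof (cases "w x W = 0")
    case False
    then have "w x W = 1"
      using x_W by simp
    then show ?thesis
      using weight_dependents_ge by simp
  qed (use weight_dependents_ge in simp)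
  ultimately show ?thesis
    using card_classes_eq_outside[OF W_heavy] card_outside_le card_outside_zero_weight_less
      total_weight_split many_dependents
    by linarith
qed

end

theorem card_classes_le_coalition_bound:
  assumes v: "v \<in> V" and "(\<Sum>X\<in>\<Omega>. w v X) \<le> d" and "d \<le> D"
  shows "int (card \<Omega>) \<le> coalition_bound d D"
proof -
  have heavy_light: "2 * card (heavy v) + card (light v) \<le> d"
    using heavy_light_le_total_weight[of v] assms(2) by linarith
  show ?thesis
  proof (cases "\<exists>W\<in>heavy v. D - 3 < card (dependents v W)")
    case True
    then obtain W where W: "W \<in> heavy v" "D - 3 < card (dependents v W)"
      by blast
    then obtain x where "x \<in> V" "w x W \<le> 1"
      using class_not_dominating by (auto simp: heavy_def)
    then have "card \<Omega> \<le> D \<or> card \<Omega> + 2 \<le> D + card (heavy v)"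
      using card_classes_le_heavy[OF v _ W(1)] W(2) by fastforce
    then show ?thesis
      using heavy_light assms(3) by (intro le_coalition_boundI1[of "card (heavy v)"]) auto
  next
    case False
    then have "(\<Sum>W\<in>heavy v. card (dependents v W)) \<le> card (heavy v) * (D - 3)"
      using sum_bounded_above[of "heavy v" "\<lambda>W. card (dependents v W)" "D - 3"] by force
    then have "card \<Omega> \<le> card (heavy v) + card (light v) + card (heavy v) * (D - 3)"
      using card_classes_eq[of v] card_unseen_le[OF v] by linarith
    then show ?thesis
      using heavy_light assms(3) by (intro le_coalition_boundI2[of "card (heavy v)" "card (light v)"])
  qed
qed

end

lemma sum_card_Int_partition:
  assumes "partition_on A P" "finite A" "S \<subseteq> A"
  shows "(\<Sum>X\<in>P. card (S \<inter> X)) = card S"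
proof -
  have "S = (\<Union>X\<in>P. S \<inter> X)"
    using assms(1,3) by (auto simp: partition_on_def)
  moreover have "card (\<Union>X\<in>P. S \<inter> X) = (\<Sum>X\<in>P. card (S \<inter> X))"
  proof (rule card_UN_disjoint)
    show "finite P"
      using finite_elements[OF assms(2,1)] .
    show "\<forall>X\<in>P. finite (S \<inter> X)"
      using assms(2,3) finite_subset by blast
    show "\<forall>X\<in>P. \<forall>Y\<in>P. X \<noteq> Y \<longrightarrow> S \<inter> X \<inter> (S \<inter> Y) = {}"
      using partition_onD2[OF assms(1)] by (auto simp: disjoint_def)
  qed
  ultimately show ?thesis
    by simp
qed

lemma weighted_coalition_partition_total_2:
  assumes "finite V" "total_2_coalition_partition V E \<Omega>"
  shows "weighted_coalition_partition V \<Omega> (total_2_coalition V E)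
           (\<lambda>y X. card (nbhd V E y \<inter> X)) (max_degree V E)"
proof
  have part: "partition_on V \<Omega>"
    using assms(2) by (simp add: total_2_coalition_partition_def)
  have nbhd_V: "nbhd V E y \<subseteq> V" for y
    by (auto simp: nbhd_def)
  show "finite \<Omega>"
    using finite_elements[OF assms(1) part] .
  show "\<exists>Y\<in>\<Omega>. Y \<noteq> X \<and> total_2_coalition V E X Y" if "X \<in> \<Omega>" for X
    using assms(2) that by (auto simp: total_2_coalition_partition_def)
  show "2 \<le> card (nbhd V E y \<inter> X) + card (nbhd V E y \<inter> Y)"
    if "X \<in> \<Omega>" "Y \<in> \<Omega>" "total_2_coalition V E X Y" "y \<in> V" for X Y y
  proof -
    have "X \<inter> Y = {}" "2 \<le> card (nbhd V E y \<inter> (X \<union> Y))"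
      using that by (auto simp: total_2_coalition_def total_2_dominating_def)
    moreover have "finite (nbhd V E y)"
      using assms(1) nbhd_V finite_subset by blast
    ultimately show ?thesis
      by (metis Int_Un_distrib card_Un_disjoint disjoint_iff finite_Int IntD2)
  qed
  show "\<exists>y\<in>V. card (nbhd V E y \<inter> X) \<le> 1" if "X \<in> \<Omega>" for X
  proof -
    obtain Y where "total_2_coalition V E X Y"
      using assms(2) \<open>X \<in> \<Omega>\<close> by (auto simp: total_2_coalition_partition_def)
    moreover have "X \<subseteq> V"
      using part that by (auto simp: partition_on_def)
    ultimately obtain y where "y \<in> V" "\<not> 2 \<le> card (nbhd V E y \<inter> X)"
      by (auto simp: total_2_coalition_def total_2_dominating_def)
    then show ?thesis
      by (intro bexI[of _ y]) auto
  qed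
  show "(\<Sum>X\<in>\<Omega>. card (nbhd V E y \<inter> X)) \<le> max_degree V E" if "y \<in> V" for y
    using sum_card_Int_partition[OF part assms(1) nbhd_V] assms(1) that
    by (simp add: max_degree_def degree_def)
qed

lemma card_total_2_coalition_partition_le:
  assumes "finite V" "V \<noteq> {}" "total_2_coalition_partition V E \<Omega>"
  shows "int (card \<Omega>) \<le> TC2_bound V E"
proof -
  interpret weighted_coalition_partition V \<Omega> "total_2_coalition V E"
      "\<lambda>y X. card (nbhd V E y \<inter> X)" "max_degree V E"
    using weighted_coalition_partition_total_2[OF assms(1,3)] .
  have "min_degree V E \<in> degree V E ` V"
    unfolding min_degree_def using assms(1,2) by (intro Min_in) auto
  then obtain v where v: "v \<in> V" "degree V E v = min_degree V E"
    by auto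
  have "(\<Sum>X\<in>\<Omega>. card (nbhd V E v \<inter> X)) = min_degree V E"
    using sum_card_Int_partition[of V \<Omega> "nbhd V E v"] assms v
    by (auto simp: total_2_coalition_partition_def degree_def nbhd_def)
  moreover have "min_degree V E \<le> max_degree V E"
    unfolding max_degree_def using assms(1) v by (metis Max_ge finite_imageI imageI)
  ultimately show ?thesis
    using card_classes_le_coalition_bound[OF v(1)] by (simp add: TC2_bound_eq)
qed

lemma TC2_le_TC2_bound:
  assumes "finite V" "V \<noteq> {}"
  shows "int (TC2 V E) \<le> TC2_bound V E"
proof (cases "\<exists>\<Omega>. total_2_coalition_partition V E \<Omega>")
  case True
  then have "TC2 V E \<le> nat (TC2_bound V E)"
    unfolding TC2_def using card_total_2_coalition_partition_le[OF assms]
    by (intro cSup_least) force+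
  then show ?thesis
    by (simp add: le_nat_iff TC2_bound_def)
next
  case False
  then show ?thesis
    by (simp add: TC2_def TC2_bound_def)
qed

lemma card_le_TC2:
  assumes "finite V" "total_2_coalition_partition V E \<Omega>"
  shows "card \<Omega> \<le> TC2 V E"
proof -
  have "{card \<Omega> | \<Omega>. total_2_coalition_partition V E \<Omega>} \<subseteq> card ` {P. partition_on V P}"
    by (auto simp: total_2_coalition_partition_def)
  then have "bdd_above {card \<Omega> | \<Omega>. total_2_coalition_partition V E \<Omega>}"
    using finitely_many_partition_on[OF assms(1)] by (meson bdd_above_finite finite_imageI finite_subset)
  then show ?thesis
    unfolding TC2_def using assms(2) by (intro cSup_upper) auto
qed

definition complete_adj :: "'a set \<Rightarrow> 'a \<Rightarrow> 'a \<Rightarrow> bool" where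
  "complete_adj V u v \<longleftrightarrow> u \<in> V \<and> v \<in> V \<and> u \<noteq> v"

lemma graph_complete_adj:
  assumes "finite V" "V \<noteq> {}"
  shows "graph V (complete_adj V)"
  unfolding graph_def
proof (intro conjI allI impI ballI)
  fix u v assume "u \<in> V" "v \<in> V"
  then show "(complete_adj V)\<^sup>*\<^sup>* u v"
    by (cases "u = v") (auto simp: complete_adj_def intro: r_into_rtranclp)
qed (use assms in \<open>auto simp: complete_adj_def\<close>)

lemma nbhd_complete_adj: "v \<in> V \<Longrightarrow> nbhd V (complete_adj V) v = V - {v}"
  by (auto simp: nbhd_def complete_adj_def)

lemma degrees_complete_adj:
  assumes "finite V" "V \<noteq> {}"
  shows "min_degree V (complete_adj V) = card V - 1" "max_degree V (complete_adj V) = card V - 1"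
proof -
  have "degree V (complete_adj V) ` V = {card V - 1}"
    using assms by (auto simp: degree_def nbhd_complete_adj)
  then show "min_degree V (complete_adj V) = card V - 1" "max_degree V (complete_adj V) = card V - 1"
    by (simp_all add: min_degree_def max_degree_def)
qed

lemma total_2_coalition_partition_triangle:
  "total_2_coalition_partition {0, 1, 2 :: nat} (complete_adj {0, 1, 2}) {{0}, {1, 2}}"
proof -
  let ?V = "{0, 1, 2 :: nat}"
  have dom_iff: "total_2_dominating ?V (complete_adj ?V) S
      \<longleftrightarrow> S \<subseteq> ?V \<and> (\<forall>v\<in>?V. 2 \<le> card ((?V - {v}) \<inter> S))" for S
    by (simp add: total_2_dominating_def nbhd_complete_adj)
  have "\<not> total_2_dominating ?V (complete_adj ?V) {0}"
    "\<not> total_2_dominating ?V (complete_adj ?V) {1, 2}"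
    "total_2_dominating ?V (complete_adj ?V) ({0} \<union> {1, 2})"
    "total_2_dominating ?V (complete_adj ?V) ({1, 2} \<union> {0})"
    unfolding dom_iff by (auto simp: insert_Diff_if)
  moreover have "partition_on ?V {{0}, {1, 2}}"
    by (auto simp: partition_on_def disjoint_def)
  ultimately show ?thesis
    by (auto simp: total_2_coalition_partition_def total_2_coalition_def)
qed

lemma TC2_triangle:
  "int (TC2 {0, 1, 2 :: nat} (complete_adj {0, 1, 2})) = TC2_bound {0, 1, 2 :: nat} (complete_adj {0, 1, 2})"
proof -
  have "TC2_bound {0, 1, 2 :: nat} (complete_adj {0, 1, 2}) = 2"
    by (simp add: TC2_bound_def degrees_complete_adj)
  moreover have "2 \<le> TC2 {0, 1, 2 :: nat} (complete_adj {0, 1, 2})"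
    using card_le_TC2[OF _ total_2_coalition_partition_triangle] by simp
  ultimately show ?thesis
    using TC2_le_TC2_bound[of "{0, 1, 2 :: nat}" "complete_adj {0, 1, 2}"] by simp
qed

theorem theorem3p5:
  shows "(\<forall>(V :: 'a set) E. graph V E \<and> min_degree V E \<ge> 2 \<longrightarrow>
            int (TC2 V E) \<le> TC2_bound V E)
       \<and> (\<exists>(V :: nat set) E. graph V E \<and> min_degree V E \<ge> 2 \<and>
            int (TC2 V E) = TC2_bound V E)"
proof
  show "\<forall>(V :: 'a set) E. graph V E \<and> min_degree V E \<ge> 2 \<longrightarrow> int (TC2 V E) \<le> TC2_bound V E"
    using TC2_le_TC2_bound by (auto simp: graph_def)
  have "graph {0, 1, 2 :: nat} (complete_adj {0, 1, 2})"
    by (rule graph_complete_adj) auto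
  moreover have "min_degree {0, 1, 2 :: nat} (complete_adj {0, 1, 2}) = 2"
    by (simp add: degrees_complete_adj)
  ultimately show "\<exists>(V :: nat set) E. graph V E \<and> min_degree V E \<ge> 2 \<and> int (TC2 V E) = TC2_bound V E"
    using TC2_triangle by fastforce
qed

end
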